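(* Let $E$ be a two-dimensional complex Hilbert space, let $u_E\in E$ satisfy $0<\|u_E\|<1$, and let $T_0\in B(E)_+$ be strictly positive. Define recursively $$T_{n+1}:=T_n^{1/2}\bigl(I_E-|u_E\rangle\langle u_E|\bigr)T_n^{1/2}\qquad(n\ge 0),$$ and let $T_\infty:=\lim_{n\to\infty}T_n$ (the limit exists in norm). Write $e:=u_E/\|u_E\|$, $\tau:=\|u_E\|^2\in(0,1)$, $\rho:=1-\tau\in(0,1)$, let $f$ be a unit vector spanning $e^\perp$, and with respect to $E=\mathbb{C}e\oplus\mathbb{C}f$ write $$T_0=\begin{pmatrix}a_0 & b_0\\ \overline{b_0} & d_0\end{pmatrix}.$$ Then: (1) If $b_0=0$ (equivalently, $e^\perp$ reduces $T_0$), then $T_\infty=0\oplus d_0$, i.e. $T_\infty=d_0|f\rangle\langle f|$. (2) If $b_0\neq 0$, then $T_\infty=0$.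
   Context: For vectors $x,y$, $|x\rangle\langle y|$ denotes the rank-one operator $z\mapsto\langle y,z\rangle x$. $B(E)_+$ denotes the positive operators on $E$, and $T^{1/2}$ the positive square root. The sequence $(T_n)$ is decreasing in the operator order, so it converges. *)

theory Defs
  imports "HOL-Analysis.Analysis"
begin

text \<open>The two-dimensional complex Hilbert space E is modelled as complex^2
  (with its standard inner product, conjugate-linear in the first argument);
  operators on E are 2x2 complex matrices acting by mult. by a vector.\<close>

type_synonym cvec = "complex ^ 2"
type_synonym cop = "complex ^ 2 ^ 2"

definition cinner :: "cvec \<Rightarrow> cvec \<Rightarrow> complex" where
  "cinner x y = (\<Sum>i\<in>UNIV. cnj (x $ i) * y $ i)"

definition ketbra :: "cvec \<Rightarrow> cvec \<Rightarrow> cop" where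
  "ketbra x y = (\<chi> i j. x $ i * cnj (y $ j))"

definition op_scale :: "complex \<Rightarrow> cop \<Rightarrow> cop" where
  "op_scale c A = (\<chi> i j. c * A $ i $ j)"

definition positive_op :: "cop \<Rightarrow> bool" where
  "positive_op A \<longleftrightarrow> (\<forall>x. Im (cinner x (A *v x)) = 0 \<and> 0 \<le> Re (cinner x (A *v x)))"

text \<open>Strictly positive operator: positive and <x, A x> > 0 for x \<noteq> 0
  (in finite dimensions equivalent to positive and invertible).\<close>
definition strictly_positive_op :: "cop \<Rightarrow> bool" where
  "strictly_positive_op A \<longleftrightarrow> positive_op A \<and> (\<forall>x. x \<noteq> 0 \<longrightarrow> 0 < Re (cinner x (A *v x)))"

definition op_sqrt :: "cop \<Rightarrow> cop" where
  "op_sqrt A = (THE P. positive_op P \<and> P ** P = A)"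

end

theory Submission
  imports Defs
begin

text \<open>Write a_n, b_n, d_n for the entries of T_n in the basis e, f (so u = |u| e), tau = |u|^2
  and delta_n = (det T_n)^{1/2}. For a positive 2x2 matrix T with positive determinant,
  Cayley-Hamilton yields the square root T^{1/2} = (T + delta I) / (tr T + 2 delta)^{1/2}, and
  T^{1/2} (I - |u><u|) T^{1/2} = T - |v><v| with v = T^{1/2} u. Hence the sequences a_n and d_n
  decrease, det T_{n+1} = (1 - tau) det T_n by multiplicativity, and
  b_{n+1} = (1 - kappa_n) b_n with kappa_n = tau (a_n + delta_n) / (a_n + d_n + 2 delta_n).
  The decrements of a_n and d_n dominate multiples of a_n^2 and |b_n|^2, so these are summable
  and a_n, b_n tend to 0. If b_0 = 0, then all b_n vanish and d_n is constant. If b_0 is nonzero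
  and d_n decreased to some c > 0, then a_n d_n = |b_n|^2 + delta_n^2 would make a_n, hence
  kappa_n, summable, and the convergent product of the factors 1 - kappa_k would keep b_n away
  from 0.\<close>

lemma vec2_eq_iff: "(x::'a^2) = y \<longleftrightarrow> x$1 = y$1 \<and> x$2 = y$2"
  by (metis (full_types) exhaust_2 vec_eq_iff)

lemma mat2_eq_iff:
  "(A::'a^2^2) = B \<longleftrightarrow> A$1$1 = B$1$1 \<and> A$1$2 = B$1$2 \<and> A$2$1 = B$2$1 \<and> A$2$2 = B$2$2"
  by (metis vec2_eq_iff)

lemma cinner_2: "cinner x y = cnj (x$1) * y$1 + cnj (x$2) * y$2"
  by (simp add: cinner_def sum_2)

lemma matrix_vector_mult_2: "((A::cop) *v x) $ i = A$i$1 * x$1 + A$i$2 * x$2"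
  by (simp add: matrix_vector_mult_def sum_2)

lemma matrix_matrix_mult_2: "((A::cop) ** B) $ i $ j = A$i$1 * B$1$j + A$i$2 * B$2$j"
  by (simp add: matrix_matrix_mult_def sum_2)

lemma trace_2: "trace (A::cop) = A$1$1 + A$2$2"
  by (simp add: trace_def sum_2)

lemma ketbra_nth [simp]: "ketbra x y $ i $ j = x $ i * cnj (y $ j)"
  by (simp add: ketbra_def)

lemma op_scale_nth [simp]: "op_scale c A $ i $ j = c * A $ i $ j"
  by (simp add: op_scale_def)

lemma cinner_commute: "cinner x y = cnj (cinner y x)"
  by (simp add: cinner_2 mult.commute)

lemma norm_2_squared: "(norm (x::cvec))\<^sup>2 = (cmod (x$1))\<^sup>2 + (cmod (x$2))\<^sup>2"
  by (simp add: norm_vec_def L2_set_def sum_2)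

lemma cinner_self: "cinner x x = of_real ((norm x)\<^sup>2)"
  unfolding cinner_2 norm_2_squared of_real_add complex_norm_square by (simp add: mult.commute)

lemma cinner_ketbra: "cinner x (ketbra v w *v y) = cinner x v * cinner w y"
  by (simp add: cinner_2 matrix_vector_mult_2 algebra_simps)

lemma cinner_diff_op: "cinner x ((A - B) *v y) = cinner x (A *v y) - cinner x (B *v y)"
  by (simp add: cinner_2 matrix_vector_mult_2 algebra_simps)

lemma cinner_add_op: "cinner x ((A + B) *v y) = cinner x (A *v y) + cinner x (B *v y)"
  by (simp add: cinner_2 matrix_vector_mult_2 algebra_simps)

lemma cinner_op_scale: "cinner x (op_scale c A *v y) = c * cinner x (A *v y)"
  by (simp add: cinner_2 matrix_vector_mult_2 algebra_simps)

lemma cinner_scaleR_right: "cinner x (r *\<^sub>R y) = of_real r * cinner x y"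
  unfolding cinner_2 vector_scaleR_component by (simp add: scaleR_conv_of_real algebra_simps)

lemma matrix_vector_mult_scaleR_complex: "(A::cop) *v (r *\<^sub>R x) = r *\<^sub>R (A *v x)"
  unfolding vec2_eq_iff matrix_vector_mult_2 vector_scaleR_component
  by (simp add: scaleR_conv_of_real algebra_simps)

lemma cinner_mat: "cinner x (mat c *v y) = c * cinner x y"
  by (simp add: cinner_2 matrix_vector_mult_2 mat_def algebra_simps)

lemma cinner_Cauchy_Schwarz: "(cmod (cinner u x))\<^sup>2 \<le> (norm u)\<^sup>2 * (norm x)\<^sup>2"
proof -
  have "(norm u)\<^sup>2 * (norm x)\<^sup>2 - (cmod (cinner u x))\<^sup>2 = (cmod (u$1 * x$2 - u$2 * x$1))\<^sup>2"
    unfolding cinner_2 norm_2_squared cmod_power2 by (simp add: power2_eq_square algebra_simps)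
  then show ?thesis
    by (metis diff_ge_0_iff_ge zero_le_power2)
qed

definition adj :: "cop \<Rightarrow> cop" where
  "adj A = (\<chi> i j. cnj (A$j$i))"

definition hermitian :: "cop \<Rightarrow> bool" where
  "hermitian A \<longleftrightarrow> adj A = A"

lemma adj_nth [simp]: "adj A $ i $ j = cnj (A$j$i)"
  by (simp add: adj_def)

lemma cinner_adj: "cinner x (A *v y) = cinner (adj A *v x) y"
  by (simp add: cinner_2 matrix_vector_mult_2 algebra_simps)

lemma hermitian_iff: "hermitian A \<longleftrightarrow> Im (A$1$1) = 0 \<and> Im (A$2$2) = 0 \<and> A$2$1 = cnj (A$1$2)"
  unfolding hermitian_def mat2_eq_iff by (auto simp: complex_eq_iff)

lemma cinner_hermitian: "hermitian A \<Longrightarrow> cinner x (A *v y) = cnj (cinner y (A *v x))"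
  by (metis cinner_adj cinner_commute hermitian_def)

lemma cinner_hermitian_real: "hermitian A \<Longrightarrow> cinner x (A *v x) = of_real (Re (cinner x (A *v x)))"
  by (metis cinner_hermitian complex_cnj_complex_of_real Reals_cnj_iff complex_is_Real_iff of_real_Re)

lemma hermitian_det_real: "hermitian A \<Longrightarrow> det A = of_real (Re (det A))"
  by (simp add: hermitian_iff det_2 complex_eq_iff)

lemma hermitian_trace_real: "hermitian A \<Longrightarrow> trace A = of_real (Re (trace A))"
  by (simp add: hermitian_iff trace_2 complex_eq_iff)

section \<open>Positive matrices and their square roots\<close>

lemma positive_op_hermitian:
  assumes "positive_op A"
  shows "hermitian A"
proof -
  have real_form: "Im (cinner x (A *v x)) = 0" for x
    using assms positive_op_def by blast
  have "Im (A$1$1) = 0" using real_form[of "vector [1, 0]"]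
    by (simp add: cinner_2 matrix_vector_mult_2)
  moreover have "Im (A$2$2) = 0" using real_form[of "vector [0, 1]"]
    by (simp add: cinner_2 matrix_vector_mult_2)
  moreover have "Im (A$1$2) + Im (A$2$1) = 0" using real_form[of "vector [1, 1]"] calculation
    by (simp add: cinner_2 matrix_vector_mult_2)
  moreover have "Re (A$1$2) = Re (A$2$1)" using real_form[of "vector [1, \<i>]"] calculation
    by (simp add: cinner_2 matrix_vector_mult_2)
  ultimately show ?thesis
    by (auto simp: hermitian_iff complex_eq_iff)
qed

lemma positive_op_trace_nonneg:
  assumes "positive_op A"
  shows "0 \<le> Re (trace A)"
proof -
  have "0 \<le> Re (cinner x (A *v x))" for x
    using assms positive_op_def by blast
  from this[of "vector [1, 0]"] this[of "vector [0, 1]"] show ?thesis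
    by (simp add: cinner_2 matrix_vector_mult_2 trace_2)
qed

lemma positive_op_det_nonneg:
  assumes "positive_op A"
  shows "0 \<le> Re (det A)"
proof -
  define p s q where "p = Re (A$1$1)" and "s = Re (A$2$2)" and "q = A$1$2"
  have entries: "A$1$1 = of_real p" "A$2$2 = of_real s" "A$2$1 = cnj q"
    using positive_op_hermitian[OF assms] by (auto simp: hermitian_iff p_def s_def q_def complex_eq_iff)
  have form: "0 \<le> Re (cinner x (A *v x))" for x
    using assms positive_op_def by blast
  have det: "Re (det A) = p * s - (Re q)\<^sup>2 - (Im q)\<^sup>2"
    by (simp add: det_2 entries q_def power2_eq_square)
  have p_nonneg: "0 \<le> p" and s_nonneg: "0 \<le> s"
    using form[of "vector [1, 0]"] form[of "vector [0, 1]"]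
    by (simp_all add: cinner_2 matrix_vector_mult_2 entries)
  show ?thesis
  proof (cases "p + s = 0")
    case True
    then have "p = 0" "s = 0"
      using p_nonneg s_nonneg by linarith+
    then show ?thesis
      using form[of "vector [1, - cnj q]"]
      by (simp add: det cinner_2 matrix_vector_mult_2 entries q_def power2_eq_square algebra_simps)
  next
    case False
    then have "0 < p + s"
      using p_nonneg s_nonneg by linarith
    moreover have "0 \<le> p * Re (det A)"
      using form[of "vector [- q, of_real p]"]
      by (simp add: det cinner_2 matrix_vector_mult_2 entries q_def power2_eq_square algebra_simps)
    moreover have "0 \<le> s * Re (det A)"
      using form[of "vector [of_real s, - cnj q]"]
      by (simp add: det cinner_2 matrix_vector_mult_2 entries q_def power2_eq_square algebra_simps)
    ultimately show ?thesis
      by (metis add_nonneg_nonneg distrib_right zero_le_mult_iff not_less)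
  qed
qed

lemma strictly_positive_op_det_pos:
  assumes "strictly_positive_op A"
  shows "0 < Re (det A)"
proof -
  define p q where "p = Re (A$1$1)" and "q = A$1$2"
  have entries: "A$1$1 = of_real p" "A$2$1 = cnj q" "Im (A$2$2) = 0"
    using assms positive_op_hermitian
    by (auto simp: strictly_positive_op_def hermitian_iff p_def q_def complex_eq_iff)
  have form: "x \<noteq> 0 \<Longrightarrow> 0 < Re (cinner x (A *v x))" for x
    using assms strictly_positive_op_def by blast
  have "0 < p"
    using form[of "vector [1, 0]"] by (simp add: vec2_eq_iff cinner_2 matrix_vector_mult_2 entries)
  moreover have "0 < p * Re (det A)"
    using form[of "vector [- q, of_real p]"] \<open>0 < p\<close>
    by (simp add: vec2_eq_iff det_2 cinner_2 matrix_vector_mult_2 entries q_def power2_eq_square algebra_simps)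
  ultimately show ?thesis
    by (simp add: zero_less_mult_iff)
qed

lemma Cayley_Hamilton_2: "(A::cop) ** A = op_scale (trace A) A - mat (det A)"
  by (simp add: mat2_eq_iff matrix_matrix_mult_2 trace_2 det_2 mat_def algebra_simps)

lemma op_sqrt_formula:
  assumes pos: "positive_op A" and det_pos: "0 < Re (det A)"
    and \<delta>_def: "\<delta> = sqrt (Re (det A))" and t_def: "t = sqrt (Re (trace A) + 2 * \<delta>)"
  shows "op_sqrt A = op_scale (of_real (1 / t)) (A + mat (of_real \<delta>))"
    and "positive_op (op_sqrt A)" and "op_sqrt A ** op_sqrt A = A"
proof -
  define F where "F = op_scale (of_real (1 / t)) (A + mat (of_real \<delta>))"
  have herm: "hermitian A" by (rule positive_op_hermitian[OF pos])
  have \<delta>_pos: "0 < \<delta>" using det_pos by (simp add: \<delta>_def)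
  have t_pos: "0 < t" using positive_op_trace_nonneg[OF pos] \<delta>_pos by (simp add: t_def)
  have det_A: "det A = of_real (\<delta>\<^sup>2)"
    using hermitian_det_real[OF herm] det_pos by (simp add: \<delta>_def)
  have trace_A: "trace A = of_real (t\<^sup>2 - 2 * \<delta>)"
    using hermitian_trace_real[OF herm] positive_op_trace_nonneg[OF pos] \<delta>_pos
    by (simp add: t_def)
  have F_pos: "positive_op F"
    using pos t_pos \<delta>_pos unfolding positive_op_def F_def
    by (simp add: cinner_op_scale cinner_add_op cinner_mat cinner_self)
  have F_sq: "F ** F = A"
  proof -
    have "F ** F = op_scale (of_real (1 / t\<^sup>2)) ((A + mat (of_real \<delta>)) ** (A + mat (of_real \<delta>)))"
      by (simp add: F_def mat2_eq_iff matrix_matrix_mult_2 power2_eq_square algebra_simps)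
    also have "\<dots> = op_scale (of_real (1 / t\<^sup>2))
        (A ** A + op_scale (2 * of_real \<delta>) A + mat (of_real (\<delta>\<^sup>2)))"
      by (simp add: mat2_eq_iff matrix_matrix_mult_2 mat_def power2_eq_square algebra_simps)
    also have "\<dots> = op_scale (of_real (1 / t\<^sup>2)) (op_scale (of_real (t\<^sup>2)) A)"
      unfolding Cayley_Hamilton_2[of A] det_A trace_A
      by (simp add: mat2_eq_iff mat_def algebra_simps)
    also have "\<dots> = A"
      using t_pos by (simp add: mat2_eq_iff)
    finally show ?thesis .
  qed
  have unique: "P = F" if P_pos: "positive_op P" and P_sq: "P ** P = A" for P
  proof -
    have herm_P: "hermitian P" by (rule positive_op_hermitian[OF P_pos])
    have "(Re (det P))\<^sup>2 = \<delta>\<^sup>2"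
      using det_mul[of P P] hermitian_det_real[OF herm_P] det_A P_sq
      by (metis of_real_eq_iff of_real_mult power2_eq_square)
    then have det_P: "det P = of_real \<delta>"
      using positive_op_det_nonneg[OF P_pos] \<delta>_pos hermitian_det_real[OF herm_P]
      by (metis power2_eq_iff_nonneg less_imp_le)
    have CH: "A = op_scale (trace P) P - mat (of_real \<delta>)"
      using Cayley_Hamilton_2[of P] by (simp add: P_sq det_P)
    have "trace A = (trace P)\<^sup>2 - 2 * of_real \<delta>"
      unfolding CH by (simp add: trace_2 mat_def power2_eq_square algebra_simps)
    then have "Re (trace A) = (Re (trace P))\<^sup>2 - 2 * \<delta>"
      by (subst (asm) hermitian_trace_real[OF herm_P]) (simp add: power2_eq_square)
    then have "Re (trace P) = t"
      using positive_op_trace_nonneg[OF P_pos] positive_op_trace_nonneg[OF pos] \<delta>_pos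
      by (simp add: t_def real_sqrt_unique)
    then have "A = op_scale (of_real t) P - mat (of_real \<delta>)"
      using CH hermitian_trace_real[OF herm_P] by simp
    then show "P = F"
      using t_pos by (simp add: mat2_eq_iff mat_def F_def field_simps)
  qed
  have "op_sqrt A = F"
    unfolding op_sqrt_def
  proof (rule the_equality)
    show "positive_op F \<and> F ** F = A" using F_pos F_sq ..
  qed (use unique in blast)
  then show "op_sqrt A = op_scale (of_real (1 / t)) (A + mat (of_real \<delta>))"
    and "positive_op (op_sqrt A)" and "op_sqrt A ** op_sqrt A = A"
    using F_pos F_sq unfolding F_def by simp_all
qed

lemma positive_op_congruence:
  assumes "hermitian S" and "positive_op B"
  shows "positive_op (S ** B ** S)"
proof -
  have "cinner x ((S ** B ** S) *v x) = cinner (S *v x) (B *v (S *v x))" for x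
    using assms(1) by (simp add: cinner_adj[of x S] hermitian_def flip: matrix_vector_mul_assoc)
  then show ?thesis
    using assms(2) unfolding positive_op_def by simp
qed

lemma positive_op_one_minus_ketbra:
  assumes "norm u \<le> 1"
  shows "positive_op (mat 1 - ketbra u u)"
proof -
  have "cinner x ((mat 1 - ketbra u u) *v x) = of_real ((norm x)\<^sup>2 - (cmod (cinner u x))\<^sup>2)" for x
    using complex_norm_square[of "cinner u x"]
    by (simp add: cinner_diff_op cinner_mat cinner_ketbra cinner_self cinner_commute[of x u])
  moreover have "(cmod (cinner u x))\<^sup>2 \<le> (norm x)\<^sup>2" for x
  proof -
    have "(norm u)\<^sup>2 \<le> 1"
      using assms by (simp add: power_le_one)
    then have "(norm u)\<^sup>2 * (norm x)\<^sup>2 \<le> (norm x)\<^sup>2"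
      by (simp add: mult_left_le_one_le)
    then show ?thesis
      using cinner_Cauchy_Schwarz[of u x] by linarith
  qed
  ultimately show ?thesis
    unfolding positive_op_def by simp
qed

lemma det_one_minus_ketbra: "det (mat 1 - ketbra u u) = of_real (1 - (norm u)\<^sup>2)"
  unfolding norm_2_squared of_real_diff of_real_add complex_norm_square
  by (simp add: det_2 mat_def algebra_simps)

lemma matrix_mult_ketbra: "A ** ketbra x y ** B = ketbra (A *v x) (adj B *v y)"
  by (simp add: mat2_eq_iff matrix_matrix_mult_2 matrix_vector_mult_2 algebra_simps)

lemma congruence_one_minus_ketbra:
  assumes "hermitian S"
  shows "S ** (mat 1 - ketbra u u) ** S = S ** S - ketbra (S *v u) (S *v u)"
proof -
  have "S ** (mat 1 - ketbra u u) ** S = S ** S - S ** ketbra u u ** S"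
    by (simp add: mat2_eq_iff matrix_matrix_mult_2 mat_def algebra_simps)
  then show ?thesis
    using assms by (simp add: matrix_mult_ketbra hermitian_def)
qed

section \<open>Coordinates in an orthonormal basis\<close>

definition orthonormal_pair :: "cvec \<Rightarrow> cvec \<Rightarrow> bool" where
  "orthonormal_pair e f \<longleftrightarrow> cinner e e = 1 \<and> cinner f f = 1 \<and> cinner e f = 0"

definition basis_mat :: "cvec \<Rightarrow> cvec \<Rightarrow> cop" where
  "basis_mat e f = (\<chi> i j. if j = 1 then e$i else f$i)"

lemma basis_mat_nth [simp]: "basis_mat e f $ i $ 1 = e$i" "basis_mat e f $ i $ 2 = f$i"
  by (simp_all add: basis_mat_def)

lemma basis_mat_unitary:
  assumes "orthonormal_pair e f"
  shows "adj (basis_mat e f) ** basis_mat e f = mat 1" and "basis_mat e f ** adj (basis_mat e f) = mat 1"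
proof -
  have "cinner f e = 0"
    using assms cinner_commute[of f e] by (simp add: orthonormal_pair_def)
  then show *: "adj (basis_mat e f) ** basis_mat e f = mat 1"
    using assms by (simp add: orthonormal_pair_def mat2_eq_iff matrix_matrix_mult_2 mat_def cinner_2)
  show "basis_mat e f ** adj (basis_mat e f) = mat 1"
    using * by (simp add: matrix_left_right_inverse)
qed

lemma matrix_in_basis:
  "adj (basis_mat e f) ** A ** basis_mat e f =
     (\<chi> i j. cinner (if i = 1 then e else f) (A *v (if j = 1 then e else f)))"
  by (simp add: mat2_eq_iff matrix_matrix_mult_2 cinner_2 matrix_vector_mult_2 algebra_simps)

lemma det_in_basis:
  assumes "orthonormal_pair e f"
  shows "det A = cinner e (A *v e) * cinner f (A *v f) - cinner e (A *v f) * cinner f (A *v e)"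
proof -
  let ?U = "basis_mat e f"
  have "det A = det A * det (?U ** adj ?U)"
    using basis_mat_unitary(2)[OF assms] by simp
  also have "\<dots> = det (adj ?U ** A ** ?U)"
    by (simp add: det_mul)
  finally show ?thesis
    unfolding matrix_in_basis by (simp add: det_2)
qed

lemma hermitian_det_in_basis:
  assumes "orthonormal_pair e f" and "hermitian A"
  shows "Re (det A) = Re (cinner e (A *v e)) * Re (cinner f (A *v f)) - (cmod (cinner e (A *v f)))\<^sup>2"
proof -
  have "det A = of_real (Re (cinner e (A *v e))) * of_real (Re (cinner f (A *v f)))
      - cinner e (A *v f) * cnj (cinner e (A *v f))"
    using det_in_basis[OF assms(1)] cinner_hermitian[OF assms(2)] cinner_hermitian_real[OF assms(2)]
    by metis
  then show ?thesis
    by (simp flip: complex_norm_square)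
qed

lemma trace_in_basis:
  assumes "orthonormal_pair e f"
  shows "trace A = cinner e (A *v e) + cinner f (A *v f)"
proof -
  let ?U = "basis_mat e f"
  have "trace A = trace ((?U ** adj ?U) ** A)"
    using basis_mat_unitary(2)[OF assms] by simp
  also have "\<dots> = trace (adj ?U ** A ** ?U)"
    by (metis matrix_mul_assoc trace_mul_sym)
  finally show ?thesis
    unfolding matrix_in_basis by (simp add: trace_2)
qed

lemma entry_in_basis:
  assumes "orthonormal_pair e f"
  shows "A $ i $ j = cinner e (A *v e) * (e$i * cnj (e$j)) + cinner e (A *v f) * (e$i * cnj (f$j))
           + cinner f (A *v e) * (f$i * cnj (e$j)) + cinner f (A *v f) * (f$i * cnj (f$j))"
proof -
  let ?U = "basis_mat e f"
  have "A = (?U ** adj ?U) ** A ** (?U ** adj ?U)"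
    using basis_mat_unitary(2)[OF assms] by simp
  also have "\<dots> = ?U ** (adj ?U ** A ** ?U) ** adj ?U"
    by (simp add: matrix_mul_assoc)
  finally have "A $ i $ j = (?U ** (adj ?U ** A ** ?U) ** adj ?U) $ i $ j"
    by (rule arg_cong)
  then show ?thesis
    unfolding matrix_in_basis by (simp add: matrix_matrix_mult_2 algebra_simps)
qed

lemma tendsto_in_basis:
  assumes "orthonormal_pair e f"
    and "(\<lambda>n. cinner e (A n *v e)) \<longlonglongrightarrow> cinner e (L *v e)"
    and "(\<lambda>n. cinner e (A n *v f)) \<longlonglongrightarrow> cinner e (L *v f)"
    and "(\<lambda>n. cinner f (A n *v e)) \<longlonglongrightarrow> cinner f (L *v e)"
    and "(\<lambda>n. cinner f (A n *v f)) \<longlonglongrightarrow> cinner f (L *v f)"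
  shows "A \<longlonglongrightarrow> L"
proof (rule vec_tendstoI, rule vec_tendstoI)
  fix i j
  have "(\<lambda>n. cinner e (A n *v e) * (e$i * cnj (e$j)) + cinner e (A n *v f) * (e$i * cnj (f$j))
           + cinner f (A n *v e) * (f$i * cnj (e$j)) + cinner f (A n *v f) * (f$i * cnj (f$j)))
    \<longlonglongrightarrow> cinner e (L *v e) * (e$i * cnj (e$j)) + cinner e (L *v f) * (e$i * cnj (f$j))
           + cinner f (L *v e) * (f$i * cnj (e$j)) + cinner f (L *v f) * (f$i * cnj (f$j))"
    by (intro tendsto_intros assms(2-5))
  then show "(\<lambda>n. A n $ i $ j) \<longlonglongrightarrow> L $ i $ j"
    by (simp only: entry_in_basis[OF assms(1), symmetric])
qed

lemma sqrt_step_in_basis: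
  fixes \<nu> :: real
  assumes basis: "orthonormal_pair e f" and pos: "positive_op A" and det_pos: "0 < Re (det A)"
    and a_def: "a = Re (cinner e (A *v e))" and b_def: "b = cinner e (A *v f)"
    and d_def: "d = Re (cinner f (A *v f))"
    and \<delta>_def: "\<delta> = sqrt (Re (det A))" and s_def: "s = a + d + 2 * \<delta>"
  defines "A' \<equiv> op_sqrt A ** (mat 1 - ketbra (\<nu> *\<^sub>R e) (\<nu> *\<^sub>R e)) ** op_sqrt A"
  shows "cinner e (A' *v e) = of_real (a - \<nu>\<^sup>2 * (a + \<delta>)\<^sup>2 / s)"
    and "cinner e (A' *v f) = of_real (1 - \<nu>\<^sup>2 * (a + \<delta>) / s) * b"
    and "cinner f (A' *v f) = of_real (d - \<nu>\<^sup>2 * (cmod b)\<^sup>2 / s)"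
proof -
  have herm: "hermitian A" by (rule positive_op_hermitian[OF pos])
  have ee: "cinner e e = 1" and fe: "cinner f e = 0"
    using basis cinner_commute[of f e] by (auto simp: orthonormal_pair_def)
  have Aee: "cinner e (A *v e) = of_real a" and Aff: "cinner f (A *v f) = of_real d"
    unfolding a_def d_def by (rule cinner_hermitian_real[OF herm])+
  have Afe: "cinner f (A *v e) = cnj b"
    unfolding b_def by (rule cinner_hermitian[OF herm])
  define t where "t = sqrt s"
  have \<delta>_pos: "0 < \<delta>" using det_pos by (simp add: \<delta>_def)
  have s_pos: "0 < s"
    using \<delta>_pos positive_op_trace_nonneg[OF pos] trace_in_basis[OF basis, of A]
    by (simp add: s_def Aee Aff)
  have t_sq: "t\<^sup>2 = s" using s_pos by (simp add: t_def)
  have t_pos: "0 < t" using s_pos by (simp add: t_def)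
  have "t = sqrt (Re (trace A) + 2 * \<delta>)"
    using trace_in_basis[OF basis, of A] by (simp add: t_def s_def Aee Aff)
  note sqrt_A = op_sqrt_formula[OF pos det_pos \<delta>_def this]
  define v where "v = op_sqrt A *v (\<nu> *\<^sub>R e)"
  have A': "cinner x (A' *v y) = cinner x (A *v y) - cinner x v * cinner v y" for x y
    using congruence_one_minus_ketbra[OF positive_op_hermitian[OF sqrt_A(2)]] sqrt_A(3)
    by (simp add: A'_def v_def cinner_diff_op cinner_ketbra)
  have v: "cinner x v = of_real (\<nu> / t) * (cinner x (A *v e) + of_real \<delta> * cinner x e)" for x
    unfolding v_def sqrt_A(1) matrix_vector_mult_scaleR_complex cinner_scaleR_right
      cinner_op_scale cinner_add_op cinner_mat
    by (simp add: field_simps)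
  have ev: "cinner e v = of_real (\<nu> / t * (a + \<delta>))" and fv: "cinner f v = of_real (\<nu> / t) * cnj b"
    by (simp_all add: v Aee Afe ee fe)
  have ve: "cinner v e = of_real (\<nu> / t * (a + \<delta>))" and vf: "cinner v f = of_real (\<nu> / t) * b"
    using ev fv cinner_commute[of v e] cinner_commute[of v f] by simp_all
  show "cinner e (A' *v e) = of_real (a - \<nu>\<^sup>2 * (a + \<delta>)\<^sup>2 / s)"
    unfolding t_sq[symmetric] using t_pos by (simp add: A' Aee ev ve field_simps power2_eq_square)
  show "cinner e (A' *v f) = of_real (1 - \<nu>\<^sup>2 * (a + \<delta>) / s) * b"
    unfolding t_sq[symmetric] using t_pos
    by (simp add: A' b_def[symmetric] ev vf field_simps power2_eq_square)
  show "cinner f (A' *v f) = of_real (d - \<nu>\<^sup>2 * (cmod b)\<^sup>2 / s)"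
    unfolding t_sq[symmetric] using t_pos complex_norm_square[of b]
    by (simp add: A' Aff fv vf field_simps power2_eq_square)
qed

section \<open>The recursion for the coefficients\<close>

lemma summable_bounded_by_decrements:
  fixes f g :: "nat \<Rightarrow> real"
  assumes "\<And>n. 0 \<le> g n" and "\<And>n. g n \<le> f n - f (Suc n)" and "\<And>n. 0 \<le> f n"
  shows "summable g"
proof (rule summableI_nonneg_bounded[where x = "f 0"])
  fix n
  have "(\<Sum>k<n. g k) \<le> (\<Sum>k<n. f k - f (Suc k))"
    by (intro sum_mono assms(2))
  also have "\<dots> = f 0 - f n"
    by (rule sum_lessThan_telescope')
  finally show "(\<Sum>k<n. g k) \<le> f 0"
    using assms(3)[of n] by linarith
qed (use assms(1) in blast)

lemma summable_square_imp_tendsto_zero: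
  fixes x :: "nat \<Rightarrow> real"
  assumes "summable (\<lambda>n. (x n)\<^sup>2)"
  shows "x \<longlonglongrightarrow> 0"
proof -
  have "(\<lambda>n. sqrt ((x n)\<^sup>2)) \<longlonglongrightarrow> sqrt 0"
    by (intro tendsto_real_sqrt summable_LIMSEQ_zero assms)
  then show ?thesis
    by (simp add: tendsto_rabs_zero_iff)
qed

lemma prod_one_minus_not_tendsto_zero:
  fixes x :: "nat \<Rightarrow> real"
  assumes "\<And>n. 0 \<le> x n" and "\<And>n. x n < 1" and "summable x"
  shows "\<not> (\<lambda>n. \<Prod>k<n. 1 - x k) \<longlonglongrightarrow> 0"
proof
  assume "(\<lambda>n. \<Prod>k<n. 1 - x k) \<longlonglongrightarrow> 0"
  then have "(\<lambda>n. \<Prod>k<Suc n. 1 - x k) \<longlonglongrightarrow> 0"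
    by (rule LIMSEQ_Suc)
  then have "(\<lambda>n. \<Prod>k\<le>n. 1 - x k) \<longlonglongrightarrow> 0"
    by (simp add: lessThan_Suc_atMost)
  moreover have conv: "convergent_prod (\<lambda>k. 1 - x k)"
    using assms by (intro abs_convergent_prod_imp_convergent_prod summable_imp_abs_convergent_prod) simp
  then have "(\<lambda>n. \<Prod>k\<le>n. 1 - x k) \<longlonglongrightarrow> prodinf (\<lambda>k. 1 - x k)"
    by (rule convergent_prod_LIMSEQ)
  moreover have "prodinf (\<lambda>k. 1 - x k) \<noteq> 0"
    using assms(2) by (intro prodinf_nonzero[OF conv]) (simp add: less_le)
  ultimately show False
    using LIMSEQ_unique by blast
qed

lemma contraction_rate_less_1:
  fixes a d \<delta> \<tau> :: real
  assumes "0 \<le> a" and "0 \<le> d" and "0 < \<delta>" and "\<tau> < 1"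
  shows "\<tau> * (a + \<delta>) / (a + d + 2 * \<delta>) < 1"
proof -
  have "\<tau> * (a + \<delta>) < a + \<delta>"
    using mult_strict_right_mono[of \<tau> 1 "a + \<delta>"] assms by simp
  also have "\<dots> \<le> a + d + 2 * \<delta>"
    using assms by simp
  finally show ?thesis
    using assms by (simp add: divide_less_eq)
qed

text \<open>The parameters stand for Re <e, T_n e>, |<e, T_n f>|, Re <f, T_n f> and (det T_n)^{1/2},
  and tau for |u|^2.\<close>

locale coefficient_recursion =
  fixes \<tau> :: real and a \<beta> d \<delta> :: "nat \<Rightarrow> real"
  assumes \<tau>_pos: "0 < \<tau>" and \<tau>_less_1: "\<tau> < 1"
    and a_nonneg: "0 \<le> a n" and \<beta>_nonneg: "0 \<le> \<beta> n" and d_nonneg: "0 \<le> d n"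
    and \<delta>_pos: "0 < \<delta> n" and \<delta>_decseq: "decseq \<delta>" and \<delta>_summable: "summable \<delta>"
    and det_eq: "a n * d n - (\<beta> n)\<^sup>2 = (\<delta> n)\<^sup>2"
    and a_Suc: "a (Suc n) = a n - \<tau> * (a n + \<delta> n)\<^sup>2 / (a n + d n + 2 * \<delta> n)"
    and \<beta>_Suc: "\<beta> (Suc n) = (1 - \<tau> * (a n + \<delta> n) / (a n + d n + 2 * \<delta> n)) * \<beta> n"
    and d_Suc: "d (Suc n) = d n - \<tau> * (\<beta> n)\<^sup>2 / (a n + d n + 2 * \<delta> n)"
begin

definition s :: "nat \<Rightarrow> real" where
  "s n = a n + d n + 2 * \<delta> n"

definition \<kappa> :: "nat \<Rightarrow> real" where
  "\<kappa> n = \<tau> * (a n + \<delta> n) / s n"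

lemma s_pos: "0 < s n"
  using a_nonneg[of n] d_nonneg[of n] \<delta>_pos[of n] by (simp add: s_def)

lemma \<kappa>_nonneg: "0 \<le> \<kappa> n"
  using \<tau>_pos a_nonneg[of n] \<delta>_pos[of n] s_pos[of n] by (simp add: \<kappa>_def)

lemma \<kappa>_less_1: "\<kappa> n < 1"
  unfolding \<kappa>_def s_def using a_nonneg d_nonneg \<delta>_pos \<tau>_less_1 by (rule contraction_rate_less_1)

lemma \<beta>_Suc_\<kappa>: "\<beta> (Suc n) = (1 - \<kappa> n) * \<beta> n"
  by (simp add: \<beta>_Suc \<kappa>_def s_def)

lemma a_decrement: "\<tau> * (a n + \<delta> n)\<^sup>2 / s n = a n - a (Suc n)"
  by (simp add: a_Suc s_def)

lemma d_decrement: "\<tau> * (\<beta> n)\<^sup>2 / s n = d n - d (Suc n)"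
  by (simp add: d_Suc s_def)

lemma d_decseq: "decseq d"
proof (rule decseq_SucI)
  fix n
  have "0 \<le> \<tau> * (\<beta> n)\<^sup>2 / s n"
    using \<tau>_pos s_pos[of n] by simp
  then show "d (Suc n) \<le> d n"
    using d_decrement[of n] by linarith
qed

lemma s_le_s0: "s n \<le> s 0"
proof -
  have "s (Suc n) \<le> s n" for n
  proof -
    have "0 \<le> \<tau> * (a n + \<delta> n)\<^sup>2 / s n"
      using \<tau>_pos s_pos[of n] by simp
    then show ?thesis
      using a_decrement[of n] decseqD[OF d_decseq, of n "Suc n"] decseqD[OF \<delta>_decseq, of n "Suc n"]
      by (simp add: s_def)
  qed
  then show ?thesis
    by (metis decseq_SucI decseqD zero_le)
qed

lemma summable_decrement_bound:
  assumes "\<And>n. 0 \<le> f n" and "\<And>n. \<tau> * (x n)\<^sup>2 / s n \<le> f n - f (Suc n)"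
  shows "summable (\<lambda>n. (x n)\<^sup>2)"
proof -
  have "\<tau> / s 0 * (x n)\<^sup>2 \<le> \<tau> * (x n)\<^sup>2 / s n" for n
  proof -
    have "\<tau> / s 0 \<le> \<tau> / s n"
      using \<tau>_pos s_pos[of n] s_le_s0[of n] by (intro divide_left_mono) auto
    then have "\<tau> / s 0 * (x n)\<^sup>2 \<le> \<tau> / s n * (x n)\<^sup>2"
      by (rule mult_right_mono) simp
    then show ?thesis
      by simp
  qed
  then have "summable (\<lambda>n. \<tau> / s 0 * (x n)\<^sup>2)"
    using \<tau>_pos s_pos[of 0] assms
    by (intro summable_bounded_by_decrements[where f = f]) (auto intro: order_trans)
  then show ?thesis
    using \<tau>_pos s_pos[of 0] by (simp add: summable_cmult_iff)
qed

lemma a_tendsto_zero: "a \<longlonglongrightarrow> 0"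
proof (intro summable_square_imp_tendsto_zero summable_decrement_bound)
  show "\<tau> * (a n)\<^sup>2 / s n \<le> a n - a (Suc n)" for n
    unfolding a_decrement[symmetric] using \<tau>_pos s_pos[of n] a_nonneg[of n] \<delta>_pos[of n]
    by (intro divide_right_mono mult_left_mono power_mono) auto
qed (rule a_nonneg)

lemma summable_\<beta>_squared: "summable (\<lambda>n. (\<beta> n)\<^sup>2)"
  by (intro summable_decrement_bound[where f = d] d_nonneg) (simp add: d_decrement)

lemma \<beta>_tendsto_zero: "\<beta> \<longlonglongrightarrow> 0"
  by (rule summable_square_imp_tendsto_zero[OF summable_\<beta>_squared])

lemma \<beta>_eq_prod: "\<beta> n = \<beta> 0 * (\<Prod>k<n. 1 - \<kappa> k)"
  by (induction n) (simp_all add: \<beta>_Suc_\<kappa>)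

lemma d_constant_if_\<beta>0_zero:
  assumes "\<beta> 0 = 0"
  shows "d n = d 0"
proof -
  have "\<beta> k = 0" for k
    using assms \<beta>_eq_prod[of k] by simp
  then show ?thesis
    by (induction n) (simp_all add: d_Suc)
qed

lemma d_tendsto_zero_if_\<beta>0_nonzero:
  assumes "\<beta> 0 \<noteq> 0"
  shows "d \<longlonglongrightarrow> 0"
proof -
  obtain c where d_lim: "d \<longlonglongrightarrow> c" and c_le: "\<And>n. c \<le> d n"
    using decseq_convergent[OF d_decseq, of 0] d_nonneg by blast
  have "c = 0"
  proof (rule ccontr)
    assume "c \<noteq> 0"
    moreover have "0 \<le> c"
      using d_lim d_nonneg by (simp add: LIMSEQ_le_const)
    ultimately have c_pos: "0 < c" by simp
    have "summable (\<lambda>n. (\<delta> n)\<^sup>2)"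
    proof (rule summable_comparison_test'[OF summable_mult[OF \<delta>_summable, of "\<delta> 0"]])
      show "norm ((\<delta> n)\<^sup>2) \<le> \<delta> 0 * \<delta> n" for n
        using \<delta>_pos[of n] decseqD[OF \<delta>_decseq, of 0 n] by (simp add: power2_eq_square)
    qed
    then have "summable (\<lambda>n. ((\<beta> n)\<^sup>2 + (\<delta> n)\<^sup>2) / c)"
      by (intro summable_divide summable_add summable_\<beta>_squared)
    then have summable_a: "summable a"
    proof (rule summable_comparison_test'[where N = 0])
      fix n
      have "a n * c \<le> a n * d n"
        by (rule mult_left_mono[OF c_le a_nonneg])
      then show "norm (a n) \<le> ((\<beta> n)\<^sup>2 + (\<delta> n)\<^sup>2) / c"
        using det_eq[of n] c_pos a_nonneg[of n] by (simp add: pos_le_divide_eq)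
    qed
    have "summable (\<lambda>n. (a n + \<delta> n) / c)"
      by (intro summable_divide summable_add summable_a \<delta>_summable)
    then have "summable \<kappa>"
    proof (rule summable_comparison_test'[where N = 0])
      fix n
      have "\<kappa> n \<le> (a n + \<delta> n) / s n"
        using \<tau>_less_1 a_nonneg[of n] \<delta>_pos[of n] s_pos[of n]
        by (simp add: \<kappa>_def divide_right_mono mult_left_le_one_le)
      also have "\<dots> \<le> (a n + \<delta> n) / c"
        using c_pos c_le[of n] a_nonneg[of n] \<delta>_pos[of n]
        by (intro divide_left_mono) (auto simp: s_def)
      finally show "norm (\<kappa> n) \<le> (a n + \<delta> n) / c"
        using \<kappa>_nonneg[of n] by simp
    qed
    moreover have "(\<lambda>n. \<Prod>k<n. 1 - \<kappa> k) \<longlonglongrightarrow> 0"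
    proof -
      have "\<beta> n / \<beta> 0 = (\<Prod>k<n. 1 - \<kappa> k)" for n
        using assms \<beta>_eq_prod[of n] by simp
      then show ?thesis
        using tendsto_divide[OF \<beta>_tendsto_zero tendsto_const[of "\<beta> 0"]] assms by simp
    qed
    ultimately show False
      using prod_one_minus_not_tendsto_zero \<kappa>_nonneg \<kappa>_less_1 by blast
  qed
  then show ?thesis
    using d_lim by simp
qed

end

section \<open>The iteration\<close>

lemma iteration_positive_det:
  assumes T0: "strictly_positive_op (T 0)" and u_less_1: "norm u < 1"
    and T_Suc: "\<And>n. T (Suc n) = op_sqrt (T n) ** (mat 1 - ketbra u u) ** op_sqrt (T n)"
  shows "positive_op (T n) \<and> Re (det (T n)) = (1 - (norm u)\<^sup>2) ^ n * Re (det (T 0))"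
proof (induction n)
  case 0
  then show ?case
    using T0 by (simp add: strictly_positive_op_def)
next
  case (Suc n)
  have "0 < (1 - (norm u)\<^sup>2) ^ n"
    using u_less_1 by (simp add: power_less_one_iff abs_less_iff)
  then have "0 < Re (det (T n))"
    using Suc.IH strictly_positive_op_det_pos[OF T0] by simp
  note sqrt_T = op_sqrt_formula[OF conjunct1[OF Suc.IH] this refl refl]
  let ?S = "op_sqrt (T n)"
  have pos_Suc: "positive_op (T (Suc n))"
    unfolding T_Suc using u_less_1
    by (intro positive_op_congruence positive_op_hermitian[OF sqrt_T(2)] positive_op_one_minus_ketbra) simp
  have "det (T (Suc n)) = det (?S ** ?S) * det (mat 1 - ketbra u u)"
    unfolding T_Suc det_mul by (simp add: mult_ac)
  then show ?case
    using pos_Suc Suc.IH unfolding sqrt_T(3) det_one_minus_ketbra by simp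
qed

lemma iteration_coefficient_recursion:
  assumes u_pos: "0 < norm u" and u_less_1: "norm u < 1" and T0: "strictly_positive_op (T 0)"
    and T_Suc: "\<And>n. T (Suc n) = op_sqrt (T n) ** (mat 1 - ketbra u u) ** op_sqrt (T n)"
    and basis: "orthonormal_pair e f" and u_e: "u = norm u *\<^sub>R e"
  shows "coefficient_recursion ((norm u)\<^sup>2) (\<lambda>n. Re (cinner e (T n *v e)))
           (\<lambda>n. cmod (cinner e (T n *v f))) (\<lambda>n. Re (cinner f (T n *v f))) (\<lambda>n. sqrt (Re (det (T n))))"
proof -
  define \<rho> D where "\<rho> = 1 - (norm u)\<^sup>2" and "D = Re (det (T 0))"
  have \<rho>: "0 < \<rho>" "\<rho> < 1"
    using u_pos u_less_1 by (simp_all add: \<rho>_def power_less_one_iff abs_less_iff)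
  have D_pos: "0 < D"
    using strictly_positive_op_det_pos[OF T0] by (simp add: D_def)
  have pos: "positive_op (T n)" and det: "Re (det (T n)) = \<rho> ^ n * D" for n
    using iteration_positive_det[OF T0 u_less_1 T_Suc, of n] unfolding \<rho>_def D_def by blast+
  have det_pos: "0 < Re (det (T n))" for n
    using \<rho> D_pos by (simp add: det)
  have herm: "hermitian (T n)" for n
    by (rule positive_op_hermitian[OF pos])
  define a \<beta> d \<delta> where "a = (\<lambda>n. Re (cinner e (T n *v e)))" and "\<beta> = (\<lambda>n. cmod (cinner e (T n *v f)))"
    and "d = (\<lambda>n. Re (cinner f (T n *v f)))" and "\<delta> = (\<lambda>n. sqrt (Re (det (T n))))"
  note step = sqrt_step_in_basis[OF basis pos det_pos refl refl refl refl refl, where \<nu> = "norm u", folded u_e]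
  have "coefficient_recursion ((norm u)\<^sup>2) a \<beta> d \<delta>"
  proof unfold_locales
    show "0 < (norm u)\<^sup>2" "(norm u)\<^sup>2 < 1"
      using \<rho> u_pos by (simp_all add: \<rho>_def)
    show "0 \<le> a n" "0 \<le> \<beta> n" "0 \<le> d n" "0 < \<delta> n" for n
      using pos[of n] det_pos[of n] by (simp_all add: positive_op_def a_def \<beta>_def d_def \<delta>_def)
    show "decseq \<delta>"
      using \<rho> D_pos by (intro decseq_SucI) (simp add: \<delta>_def det mult_left_le_one_le)
    have "\<delta> = (\<lambda>n. sqrt D * sqrt \<rho> ^ n)"
      by (simp add: \<delta>_def det real_sqrt_mult real_sqrt_power mult.commute)
    then show "summable \<delta>"
      using \<rho> by (simp add: summable_geometric)
    show "a n * d n - (\<beta> n)\<^sup>2 = (\<delta> n)\<^sup>2" for n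
      using hermitian_det_in_basis[OF basis herm] det_pos[of n] by (simp add: a_def \<beta>_def d_def \<delta>_def)
    show "a (Suc n) = a n - (norm u)\<^sup>2 * (a n + \<delta> n)\<^sup>2 / (a n + d n + 2 * \<delta> n)" for n
      by (simp add: a_def d_def \<delta>_def T_Suc step(1))
    show "d (Suc n) = d n - (norm u)\<^sup>2 * (\<beta> n)\<^sup>2 / (a n + d n + 2 * \<delta> n)" for n
      by (simp add: a_def \<beta>_def d_def \<delta>_def T_Suc step(3))
    show "\<beta> (Suc n) = (1 - (norm u)\<^sup>2 * (a n + \<delta> n) / (a n + d n + 2 * \<delta> n)) * \<beta> n" for n
      using contraction_rate_less_1[of "a n" "d n" "\<delta> n" "(norm u)\<^sup>2"] pos[of n] det_pos[of n] \<rho>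
      unfolding \<beta>_def T_Suc step(2) norm_mult norm_of_real
      by (simp add: positive_op_def \<rho>_def a_def d_def \<delta>_def)
  qed
  then show ?thesis
    by (simp add: a_def \<beta>_def d_def \<delta>_def)
qed

lemma iteration_limits_in_basis:
  assumes u_pos: "0 < norm u" and u_less_1: "norm u < 1" and T0: "strictly_positive_op (T 0)"
    and T_Suc: "\<And>n. T (Suc n) = op_sqrt (T n) ** (mat 1 - ketbra u u) ** op_sqrt (T n)"
    and basis: "orthonormal_pair e f" and u_e: "u = norm u *\<^sub>R e"
  shows "(\<lambda>n. cinner e (T n *v e)) \<longlonglongrightarrow> 0" and "(\<lambda>n. cinner e (T n *v f)) \<longlonglongrightarrow> 0"
    and "(\<lambda>n. cinner f (T n *v e)) \<longlonglongrightarrow> 0"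
    and "cinner e (T 0 *v f) = 0 \<Longrightarrow> (\<lambda>n. cinner f (T n *v f)) \<longlonglongrightarrow> cinner f (T 0 *v f)"
    and "cinner e (T 0 *v f) \<noteq> 0 \<Longrightarrow> (\<lambda>n. cinner f (T n *v f)) \<longlonglongrightarrow> 0"
proof -
  interpret coefficient_recursion "(norm u)\<^sup>2" "\<lambda>n. Re (cinner e (T n *v e))"
    "\<lambda>n. cmod (cinner e (T n *v f))" "\<lambda>n. Re (cinner f (T n *v f))" "\<lambda>n. sqrt (Re (det (T n)))"
    by (rule iteration_coefficient_recursion[OF assms])
  have herm: "hermitian (T n)" for n
    using iteration_positive_det[OF T0 u_less_1 T_Suc, of n] positive_op_hermitian by blast
  show "(\<lambda>n. cinner e (T n *v e)) \<longlonglongrightarrow> 0"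
    using tendsto_of_real[OF a_tendsto_zero, where 'a = complex]
    by (simp add: cinner_hermitian_real[OF herm, symmetric])
  show lim_ef: "(\<lambda>n. cinner e (T n *v f)) \<longlonglongrightarrow> 0"
    using \<beta>_tendsto_zero by (simp add: tendsto_norm_zero_iff)
  show "(\<lambda>n. cinner f (T n *v e)) \<longlonglongrightarrow> 0"
    using tendsto_cnj[OF lim_ef] by (simp add: cinner_hermitian[OF herm, where x = f and y = e])
  show "(\<lambda>n. cinner f (T n *v f)) \<longlonglongrightarrow> cinner f (T 0 *v f)" if "cinner e (T 0 *v f) = 0"
  proof -
    have "(\<lambda>n. cinner f (T n *v f)) = (\<lambda>_. cinner f (T 0 *v f))"
      using that d_constant_if_\<beta>0_zero cinner_hermitian_real[OF herm, where x = f] by (metis norm_zero)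
    then show ?thesis
      by simp
  qed
  show "(\<lambda>n. cinner f (T n *v f)) \<longlonglongrightarrow> 0" if "cinner e (T 0 *v f) \<noteq> 0"
    using tendsto_of_real[OF d_tendsto_zero_if_\<beta>0_nonzero, where 'a = complex] that
    by (simp add: cinner_hermitian_real[OF herm, symmetric])
qed

theorem theorem4p1:
  fixes u f :: cvec and T :: "nat \<Rightarrow> cop"
  assumes u_pos: "0 < norm u" and u_lt1: "norm u < 1"
    and T0: "strictly_positive_op (T 0)"
    and T_rec: "\<And>n. T (Suc n) = op_sqrt (T n) ** ((mat 1 :: cop) - ketbra u u) ** op_sqrt (T n)"
    and f_unit: "norm f = 1"
    and f_perp: "cinner (scaleR (1 / norm u) u) f = 0"
  shows "(cinner (scaleR (1 / norm u) u) (T 0 *v f) = 0 \<longrightarrow>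
           (T \<longlonglongrightarrow> op_scale (cinner f (T 0 *v f)) (ketbra f f)))
       \<and> (cinner (scaleR (1 / norm u) u) (T 0 *v f) \<noteq> 0 \<longrightarrow> (T \<longlonglongrightarrow> 0))"
proof -
  define e where "e = (1 / norm u) *\<^sub>R u"
  have ff: "cinner f f = 1" and ef: "cinner e f = 0" and fe: "cinner f e = 0"
    using f_unit f_perp cinner_commute[of f e] by (simp_all add: e_def cinner_self)
  moreover have "cinner e e = 1"
    using u_pos by (simp add: e_def cinner_self)
  ultimately have basis: "orthonormal_pair e f"
    by (simp add: orthonormal_pair_def)
  have "u = norm u *\<^sub>R e"
    using u_pos by (simp add: e_def)
  note lim = iteration_limits_in_basis[OF u_pos u_lt1 T0 T_rec basis this]
  show ?thesis
    unfolding e_def[symmetric]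
  proof (intro conjI impI)
    assume "cinner e (T 0 *v f) = 0"
    then show "T \<longlonglongrightarrow> op_scale (cinner f (T 0 *v f)) (ketbra f f)"
      using lim(1-3) lim(4)
      by (intro tendsto_in_basis[OF basis]) (simp_all add: cinner_op_scale cinner_ketbra ff ef fe)
  next
    assume "cinner e (T 0 *v f) \<noteq> 0"
    then show "T \<longlonglongrightarrow> 0"
      using lim(1-3) lim(5) by (intro tendsto_in_basis[OF basis]) (simp_all add: cinner_2)
  qed
qed

end
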